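(* There exists a $\mathrm{CMSO}[2]$-formula $\mathrm{repr}_{A,B}(a,X)$, over the vocabulary consisting of the unary set predicate $\mathsf{SET}$ and two unary relations $A,B$, with a free first-order variable $a$ and a free monadic variable $X$, such that the following holds. Let $(U,\mathcal{S})$ be a laminar set system with laminar tree $T$, and let $(A,B)$ be a bi-colouring of $L(T)=U$ identifying a set $S$ of inner nodes of $T$. Then, in the structure with universe $U$, $\mathsf{SET}$ interpreted as $\mathcal{S}$ and the unary relations interpreted as $A$ and $B$, the formula $\mathrm{repr}_{A,B}(a,X)$ is satisfied exactly when $X$ is an inner node of $T$ that belongs to $S$ and $a$ is its $A$-representative.
   Context: $\mathrm{CMSO}[2]$ is monadic second-order logic (quantification over elements and over subsets of the universe) extended with a unary set predicate true of a set iff its size is even. A set system is a pair $(U,\mathcal{S})$ with $U$ finite, $\mathcal{S}$ a family of subsets of $U$ with $\emptyset\notin\mathcal{S}$, $U\in\mathcal{S}$, $\{a\}\in\mathcal{S}$ for all $a\in U$; it is laminar if no two members overlap (intersect with neither containing the other). Its laminar tree $T$ is the rooted tree whose nodes are the members of $\mathcal{S}$, root $U$, $X$ a child of $Y$ iff $X\subsetneq Y$ with no member strictly between; leaves are the singletons, identified with elements of $U$ (so a node is the set of leaves below it). Every node is its own ancestor. A bi-colouring is a pair $(A,B)$ of disjoint subsets of $L(T)$ of equal size. A pair $(\pi,\sigma)$ of injections from a set $S$ of inner nodes to $L(T)$ identifies $S$ if each $s\in S$ is the least common ancestor of $\pi(s)$ and $\sigma(s)$; a node $x$ is $s$-requested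 if it lies on the path from $\pi(s)$ to $\sigma(s)$; the pair has unique request if each node is $s$-requested for at most one $s$. $(A,B)$ identifies $S$ if some such pair with unique request has $\pi(S)=A$ and $\sigma(S)=B$; this pair is then unique, and $\pi(s)$ is called the $A$-representative of $s\in S$. *)

theory Defs
  imports Main
begin

datatype cmso2 =
    FEq nat nat
  | FMem nat nat
  | FSet nat
  | FA nat
  | FB nat
  | FEven nat
  | FNot cmso2
  | FAnd cmso2 cmso2
  | FOr cmso2 cmso2
  | FExFO nat cmso2
  | FExSO nat cmso2

fun sat :: "'a set \<Rightarrow> 'a set set \<Rightarrow> 'a set \<Rightarrow> 'a set \<Rightarrow>
            (nat \<Rightarrow> 'a) \<Rightarrow> (nat \<Rightarrow> 'a set) \<Rightarrow> cmso2 \<Rightarrow> bool" where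
  "sat U Sys RA RB v V (FEq i j) = (v i = v j)"
| "sat U Sys RA RB v V (FMem i j) = (v i \<in> V j)"
| "sat U Sys RA RB v V (FSet j) = (V j \<in> Sys)"
| "sat U Sys RA RB v V (FA i) = (v i \<in> RA)"
| "sat U Sys RA RB v V (FB i) = (v i \<in> RB)"
| "sat U Sys RA RB v V (FEven j) = even (card (V j))"
| "sat U Sys RA RB v V (FNot \<phi>) = (\<not> sat U Sys RA RB v V \<phi>)"
| "sat U Sys RA RB v V (FAnd \<phi> \<psi>) = (sat U Sys RA RB v V \<phi> \<and> sat U Sys RA RB v V \<psi>)"
| "sat U Sys RA RB v V (FOr \<phi> \<psi>) = (sat U Sys RA RB v V \<phi> \<or> sat U Sys RA RB v V \<psi>)"
| "sat U Sys RA RB v V (FExFO i \<phi>) = (\<exists>a\<in>U. sat U Sys RA RB (v(i := a)) V \<phi>)"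
| "sat U Sys RA RB v V (FExSO j \<phi>) = (\<exists>X. X \<subseteq> U \<and> sat U Sys RA RB v (V(j := X)) \<phi>)"

definition set_system :: "'a set \<Rightarrow> 'a set set \<Rightarrow> bool" where
  "set_system U Sys \<longleftrightarrow> finite U \<and> Sys \<subseteq> Pow U \<and> {} \<notin> Sys \<and> U \<in> Sys \<and>
     (\<forall>a\<in>U. {a} \<in> Sys)"

definition overlap :: "'a set \<Rightarrow> 'a set \<Rightarrow> bool" where
  "overlap X Y \<longleftrightarrow> X \<inter> Y \<noteq> {} \<and> \<not> X \<subseteq> Y \<and> \<not> Y \<subseteq> X"

definition laminar :: "'a set \<Rightarrow> 'a set set \<Rightarrow> bool" where
  "laminar U Sys \<longleftrightarrow> set_system U Sys \<and> (\<forall>X\<in>Sys. \<forall>Y\<in>Sys. \<not> overlap X Y)"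

text \<open>Laminar tree: nodes are the members of Sys; X is a child of Y iff X is a proper
  subset of Y with no member strictly between.\<close>

definition tchild :: "'a set set \<Rightarrow> 'a set \<Rightarrow> 'a set \<Rightarrow> bool" where
  "tchild Sys X Y \<longleftrightarrow> X \<in> Sys \<and> Y \<in> Sys \<and> X \<subset> Y \<and> \<not> (\<exists>Z\<in>Sys. X \<subset> Z \<and> Z \<subset> Y)"

text \<open>tanc Sys X Y: Y is an ancestor of X (reflexive: every node is its own ancestor).\<close>

definition tanc :: "'a set set \<Rightarrow> 'a set \<Rightarrow> 'a set \<Rightarrow> bool" where
  "tanc Sys X Y \<longleftrightarrow> X \<in> Sys \<and> (tchild Sys)\<^sup>*\<^sup>* X Y"

definition inner_node :: "'a set set \<Rightarrow> 'a set \<Rightarrow> bool" where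
  "inner_node Sys X \<longleftrightarrow> X \<in> Sys \<and> (\<exists>Y. tchild Sys Y X)"

definition is_lca :: "'a set set \<Rightarrow> 'a set \<Rightarrow> 'a set \<Rightarrow> 'a set \<Rightarrow> bool" where
  "is_lca Sys P Q W \<longleftrightarrow> tanc Sys P W \<and> tanc Sys Q W \<and>
     (\<forall>Z. tanc Sys P Z \<and> tanc Sys Q Z \<longrightarrow> tanc Sys W Z)"

definition on_path :: "'a set set \<Rightarrow> 'a set \<Rightarrow> 'a set \<Rightarrow> 'a set \<Rightarrow> bool" where
  "on_path Sys P Q Z \<longleftrightarrow> (\<exists>W. is_lca Sys P Q W \<and> tanc Sys Z W \<and>
     (tanc Sys P Z \<or> tanc Sys Q Z))"

text \<open>Leaves of the laminar tree are the singletons, identified with elements of U.\<close>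

definition bicolouring :: "'a set \<Rightarrow> 'a set \<Rightarrow> 'a set \<Rightarrow> bool" where
  "bicolouring U A B \<longleftrightarrow> A \<subseteq> U \<and> B \<subseteq> U \<and> A \<inter> B = {} \<and> card A = card B"

text \<open>(pi, sigma) is a pair of injections from the set Sp of inner nodes to the leaves
  which identifies Sp and has unique request.\<close>

definition identifying_pair ::
  "'a set \<Rightarrow> 'a set set \<Rightarrow> 'a set set \<Rightarrow> ('a set \<Rightarrow> 'a) \<Rightarrow> ('a set \<Rightarrow> 'a) \<Rightarrow> bool" where
  "identifying_pair U Sys Sp \<pi> \<sigma> \<longleftrightarrow>
     (\<forall>s\<in>Sp. inner_node Sys s) \<and>
     inj_on \<pi> Sp \<and> inj_on \<sigma> Sp \<and> \<pi> ` Sp \<subseteq> U \<and> \<sigma> ` Sp \<subseteq> U \<and>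
     (\<forall>s\<in>Sp. is_lca Sys {\<pi> s} {\<sigma> s} s) \<and>
     (\<forall>x. \<forall>s\<in>Sp. \<forall>t\<in>Sp. on_path Sys {\<pi> s} {\<sigma> s} x \<and> on_path Sys {\<pi> t} {\<sigma> t} x
        \<longrightarrow> s = t)"

definition identifies :: "'a set \<Rightarrow> 'a set set \<Rightarrow> 'a set \<Rightarrow> 'a set \<Rightarrow> 'a set set \<Rightarrow> bool" where
  "identifies U Sys A B Sp \<longleftrightarrow>
     (\<exists>\<pi> \<sigma>. identifying_pair U Sys Sp \<pi> \<sigma> \<and> \<pi> ` Sp = A \<and> \<sigma> ` Sp = B)"

text \<open>a is the A-representative of s (the pair is unique, so this is well-defined).\<close>

definition A_representative ::
  "'a set \<Rightarrow> 'a set set \<Rightarrow> 'a set \<Rightarrow> 'a set \<Rightarrow> 'a set set \<Rightarrow> 'a set \<Rightarrow> 'a \<Rightarrow> bool" where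
  "A_representative U Sys A B Sp s a \<longleftrightarrow> s \<in> Sp \<and>
     (\<exists>\<pi> \<sigma>. identifying_pair U Sys Sp \<pi> \<sigma> \<and> \<pi> ` Sp = A \<and> \<sigma> ` Sp = B \<and> \<pi> s = a)"

end

theory Submission
  imports Defs
begin

text \<open>Let (\<pi>, \<sigma>) identify S. A node Z contains both ends of every s \<in> S below it, and
  one end of the at most one s \<in> S strictly above Z whose path passes through Z (unique
  request). So Z contains an odd number of coloured leaves iff such an s exists. For
  s \<in> S the count is even, whereas every node strictly between the leaf \<pi> s and s is
  passed by the path of s and has an odd count. Hence s is the least node containing
  \<pi> s with an even number of coloured leaves, a property expressible in CMSO[2] using
  the parity predicate on the set of coloured leaves of a node.\<close>

definition FImp :: "cmso2 \<Rightarrow> cmso2 \<Rightarrow> cmso2" where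
  "FImp \<phi> \<psi> = FOr (FNot \<phi>) \<psi>"

definition FIff :: "cmso2 \<Rightarrow> cmso2 \<Rightarrow> cmso2" where
  "FIff \<phi> \<psi> = FAnd (FImp \<phi> \<psi>) (FImp \<psi> \<phi>)"

definition FAllFO :: "nat \<Rightarrow> cmso2 \<Rightarrow> cmso2" where
  "FAllFO i \<phi> = FNot (FExFO i (FNot \<phi>))"

definition FAllSO :: "nat \<Rightarrow> cmso2 \<Rightarrow> cmso2" where
  "FAllSO j \<phi> = FNot (FExSO j (FNot \<phi>))"

text \<open>Both macros bind the first-order variable 1, and FEvenColoured also binds the monadic
  variable 2; hence the side condition j \<noteq> 2 in its semantics.\<close>

definition FSubset :: "nat \<Rightarrow> nat \<Rightarrow> cmso2" where
  "FSubset j k = FAllFO 1 (FImp (FMem 1 j) (FMem 1 k))"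

definition FEvenColoured :: "nat \<Rightarrow> cmso2" where
  "FEvenColoured j =
     FExSO 2 (FAnd (FAllFO 1 (FIff (FMem 1 2) (FAnd (FMem 1 j) (FOr (FA 1) (FB 1))))) (FEven 2))"

lemma sat_FImp [simp]:
  "sat U Sys RA RB v V (FImp \<phi> \<psi>) \<longleftrightarrow> (sat U Sys RA RB v V \<phi> \<longrightarrow> sat U Sys RA RB v V \<psi>)"
  by (simp add: FImp_def)

lemma sat_FIff [simp]:
  "sat U Sys RA RB v V (FIff \<phi> \<psi>) \<longleftrightarrow> (sat U Sys RA RB v V \<phi> \<longleftrightarrow> sat U Sys RA RB v V \<psi>)"
  by (auto simp add: FIff_def)

lemma sat_FAllFO [simp]:
  "sat U Sys RA RB v V (FAllFO i \<phi>) \<longleftrightarrow> (\<forall>a\<in>U. sat U Sys RA RB (v(i := a)) V \<phi>)"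
  by (simp add: FAllFO_def)

lemma sat_FAllSO [simp]:
  "sat U Sys RA RB v V (FAllSO j \<phi>) \<longleftrightarrow> (\<forall>X\<subseteq>U. sat U Sys RA RB v (V(j := X)) \<phi>)"
  by (simp add: FAllSO_def)

lemma sat_FSubset [simp]:
  "V j \<subseteq> U \<Longrightarrow> sat U Sys RA RB v V (FSubset j k) \<longleftrightarrow> V j \<subseteq> V k"
  by (auto simp add: FSubset_def)

lemma sat_FEvenColoured [simp]:
  assumes "j \<noteq> 2" and "RA \<union> RB \<subseteq> U"
  shows "sat U Sys RA RB v V (FEvenColoured j) \<longleftrightarrow> even (card (V j \<inter> (RA \<union> RB)))"
proof -
  have "Z = V j \<inter> (RA \<union> RB)"
    if "Z \<subseteq> U" and "\<forall>x\<in>U. x \<in> Z \<longleftrightarrow> x \<in> V j \<and> (x \<in> RA \<or> x \<in> RB)" for Z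
    using that assms(2) by blast
  then show ?thesis
    using assms by (auto simp add: FEvenColoured_def intro!: exI[of _ "V j \<inter> (RA \<union> RB)"])
qed

definition least_even_node :: "'a set set \<Rightarrow> 'a set \<Rightarrow> 'a set \<Rightarrow> 'a \<Rightarrow> bool" where
  "least_even_node Sys C X a \<longleftrightarrow> X \<in> Sys \<and> a \<in> X \<and> even (card (X \<inter> C)) \<and>
     (\<forall>Y\<in>Sys. a \<in> Y \<longrightarrow> Y \<subset> X \<longrightarrow> odd (card (Y \<inter> C)))"

definition repr_AB :: cmso2 where
  "repr_AB = FAnd (FA 0) (FAnd (FSet 0) (FAnd (FMem 0 0) (FAnd (FEvenColoured 0)
     (FAllSO 1 (FImp (FAnd (FSet 1) (FAnd (FMem 0 1) (FAnd (FSubset 1 0) (FNot (FSubset 0 1)))))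
                     (FNot (FEvenColoured 1)))))))"

lemma sat_repr_AB:
  assumes "Sys \<subseteq> Pow U" and "V 0 \<subseteq> U" and "A \<union> B \<subseteq> U"
  shows "sat U Sys A B v V repr_AB \<longleftrightarrow> v 0 \<in> A \<and> least_even_node Sys (A \<union> B) (V 0) (v 0)"
proof -
  have "sat U Sys A B v V repr_AB \<longleftrightarrow> v 0 \<in> A \<and> V 0 \<in> Sys \<and> v 0 \<in> V 0 \<and>
      even (card (V 0 \<inter> (A \<union> B))) \<and>
      (\<forall>Y\<subseteq>U. Y \<in> Sys \<and> v 0 \<in> Y \<and> Y \<subseteq> V 0 \<and> \<not> V 0 \<subseteq> Y \<longrightarrow> odd (card (Y \<inter> (A \<union> B))))"
    using assms(2,3) by (simp add: repr_AB_def)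
  then show ?thesis
    using assms(1) unfolding least_even_node_def psubset_eq by blast
qed

lemma ex_tchild_above:
  assumes "finite Y" and "X \<in> Sys" and "Y \<in> Sys" and "X \<subset> Y"
  shows "\<exists>Z. tchild Sys Z Y \<and> X \<subseteq> Z"
proof -
  let ?M = "{Z \<in> Sys. X \<subseteq> Z \<and> Z \<subset> Y}"
  have "finite ?M"
    by (rule finite_subset[of _ "Pow Y"]) (use \<open>finite Y\<close> in auto)
  moreover have "X \<in> ?M"
    using assms by blast
  ultimately obtain Z where "Z \<in> ?M" and "\<forall>Z'\<in>?M. Z \<le> Z' \<longrightarrow> Z = Z'"
    by (meson finite_has_maximal2)
  have "\<not> (\<exists>W\<in>Sys. Z \<subset> W \<and> W \<subset> Y)"
  proof
    assume "\<exists>W\<in>Sys. Z \<subset> W \<and> W \<subset> Y"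
    then obtain W where "W \<in> ?M" and "Z \<subset> W"
      using \<open>Z \<in> ?M\<close> by blast
    then show False
      using \<open>\<forall>Z'\<in>?M. Z \<le> Z' \<longrightarrow> Z = Z'\<close> by blast
  qed
  then have "tchild Sys Z Y"
    using \<open>Z \<in> ?M\<close> \<open>Y \<in> Sys\<close> unfolding tchild_def by blast
  then show ?thesis
    using \<open>Z \<in> ?M\<close> by blast
qed

lemma rtranclp_tchild_if_subset:
  assumes "finite Y" and "X \<in> Sys" and "Y \<in> Sys" and "X \<subseteq> Y"
  shows "(tchild Sys)\<^sup>*\<^sup>* X Y"
  using assms(1,3,4)
proof (induction Y rule: finite_psubset_induct)
  case (psubset Y)
  show ?case
  proof (cases "X = Y")
    case False
    then obtain Z where "tchild Sys Z Y" and "X \<subseteq> Z"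
      using ex_tchild_above[OF psubset.hyps(1) \<open>X \<in> Sys\<close> psubset.prems(1)] psubset.prems(2)
      by blast
    then have "(tchild Sys)\<^sup>*\<^sup>* X Z"
      using psubset.IH unfolding tchild_def by blast
    then show ?thesis
      using \<open>tchild Sys Z Y\<close> by (rule rtranclp.rtrancl_into_rtrancl)
  qed simp
qed

lemma tanc_iff_subset:
  assumes "\<And>Y. Y \<in> Sys \<Longrightarrow> finite Y"
  shows "tanc Sys X Y \<longleftrightarrow> X \<in> Sys \<and> Y \<in> Sys \<and> X \<subseteq> Y"
proof
  assume "tanc Sys X Y"
  then have "(tchild Sys)\<^sup>*\<^sup>* X Y" and "X \<in> Sys"
    unfolding tanc_def by blast+
  then show "X \<in> Sys \<and> Y \<in> Sys \<and> X \<subseteq> Y"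
    by (induction rule: rtranclp_induct) (auto simp: tchild_def)
next
  assume "X \<in> Sys \<and> Y \<in> Sys \<and> X \<subseteq> Y"
  then show "tanc Sys X Y"
    unfolding tanc_def using assms rtranclp_tchild_if_subset by blast
qed

lemma odd_card_inter_doubleton_iff:
  assumes "x \<noteq> y"
  shows "odd (card ({x, y} \<inter> Z)) \<longleftrightarrow> (x \<in> Z \<longleftrightarrow> y \<notin> Z)"
  using assms by (cases "x \<in> Z"; cases "y \<in> Z") (auto simp: Int_insert_left)

locale identifying_bicolouring =
  fixes U :: "'a set" and Sys :: "'a set set" and A B :: "'a set" and Sp :: "'a set set"
    and \<pi> \<sigma> :: "'a set \<Rightarrow> 'a"
  assumes laminar: "laminar U Sys"
    and bicolouring: "bicolouring U A B"
    and pair: "identifying_pair U Sys Sp \<pi> \<sigma>"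
    and image_\<pi>: "\<pi> ` Sp = A"
    and image_\<sigma>: "\<sigma> ` Sp = B"
begin

lemma Sys_subset_Pow: "Sys \<subseteq> Pow U"
  and singleton_in_Sys: "x \<in> U \<Longrightarrow> {x} \<in> Sys"
  and finite_U: "finite U"
  using laminar unfolding laminar_def set_system_def by auto

lemma tanc_iff: "tanc Sys X Y \<longleftrightarrow> X \<in> Sys \<and> Y \<in> Sys \<and> X \<subseteq> Y"
  using tanc_iff_subset Sys_subset_Pow finite_U by (meson PowD finite_subset subsetD)

lemma nested_if_meet: "X \<in> Sys \<Longrightarrow> Y \<in> Sys \<Longrightarrow> x \<in> X \<Longrightarrow> x \<in> Y \<Longrightarrow> X \<subseteq> Y \<or> Y \<subseteq> X"
  using laminar unfolding laminar_def overlap_def by blast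

lemma Sp_inner: "s \<in> Sp \<Longrightarrow> inner_node Sys s"
  using pair unfolding identifying_pair_def by blast

lemma Sp_subset_Sys: "Sp \<subseteq> Sys"
  using Sp_inner unfolding inner_node_def by blast

lemma finite_Sp: "finite Sp"
  using Sp_subset_Sys Sys_subset_Pow finite_U by (meson finite_Pow_iff finite_subset)

lemma ends_in_U: "s \<in> Sp \<Longrightarrow> \<pi> s \<in> U" "s \<in> Sp \<Longrightarrow> \<sigma> s \<in> U"
  using pair unfolding identifying_pair_def by auto

lemma ends_distinct: "s \<in> Sp \<Longrightarrow> t \<in> Sp \<Longrightarrow> \<pi> s \<noteq> \<sigma> t"
  using bicolouring image_\<pi> image_\<sigma> unfolding bicolouring_def by blast

lemma ends_disjoint:
  assumes "s \<in> Sp" and "t \<in> Sp" and "s \<noteq> t"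
  shows "{\<pi> s, \<sigma> s} \<inter> {\<pi> t, \<sigma> t} = {}"
proof -
  have "\<pi> s \<noteq> \<pi> t" and "\<sigma> s \<noteq> \<sigma> t"
    using pair assms unfolding identifying_pair_def by (auto dest: inj_onD)
  then show ?thesis
    using ends_distinct assms(1,2) by auto
qed

lemma lca_ends: "s \<in> Sp \<Longrightarrow> is_lca Sys {\<pi> s} {\<sigma> s} s"
  using pair unfolding identifying_pair_def by blast

lemma ends_in_node: "s \<in> Sp \<Longrightarrow> \<pi> s \<in> s" "s \<in> Sp \<Longrightarrow> \<sigma> s \<in> s"
  using lca_ends unfolding is_lca_def tanc_iff by auto

lemma node_least: "s \<in> Sp \<Longrightarrow> Z \<in> Sys \<Longrightarrow> \<pi> s \<in> Z \<Longrightarrow> \<sigma> s \<in> Z \<Longrightarrow> s \<subseteq> Z"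
  using lca_ends[of s] singleton_in_Sys ends_in_U unfolding is_lca_def tanc_iff by auto

lemma request_unique:
  assumes "s \<in> Sp" and "t \<in> Sp" and "Z \<in> Sys" and "Z \<subseteq> s" and "Z \<subseteq> t"
    and "{\<pi> s, \<sigma> s} \<inter> Z \<noteq> {}" and "{\<pi> t, \<sigma> t} \<inter> Z \<noteq> {}"
  shows "s = t"
proof -
  have "on_path Sys {\<pi> u} {\<sigma> u} Z" if "u \<in> Sp" "Z \<subseteq> u" "{\<pi> u, \<sigma> u} \<inter> Z \<noteq> {}" for u
    unfolding on_path_def
    using that lca_ends[of u] singleton_in_Sys ends_in_U[of u] Sp_subset_Sys \<open>Z \<in> Sys\<close>
    by (auto simp: tanc_iff)
  then show ?thesis
    using assms pair unfolding identifying_pair_def by blast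
qed

definition paths_through :: "'a set \<Rightarrow> 'a set set" where
  "paths_through Z = {s \<in> Sp. Z \<subset> s \<and> {\<pi> s, \<sigma> s} \<inter> Z \<noteq> {}}"

lemma odd_card_ends_iff:
  assumes "s \<in> Sp" and "Z \<in> Sys"
  shows "odd (card ({\<pi> s, \<sigma> s} \<inter> Z)) \<longleftrightarrow> s \<in> paths_through Z"
proof -
  have nested: "Z \<subseteq> s \<or> s \<subseteq> Z" if "x \<in> {\<pi> s, \<sigma> s} \<inter> Z" for x
  proof -
    have "x \<in> s"
      using that ends_in_node[OF assms(1)] by blast
    then show ?thesis
      using nested_if_meet[OF _ assms(2)] Sp_subset_Sys assms(1) that by blast
  qed
  have "s \<subseteq> Z \<longleftrightarrow> \<pi> s \<in> Z \<and> \<sigma> s \<in> Z"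
    using node_least[OF assms] ends_in_node[OF assms(1)] by blast
  then have "s \<in> paths_through Z \<longleftrightarrow> (\<pi> s \<in> Z \<longleftrightarrow> \<sigma> s \<notin> Z)"
    unfolding paths_through_def using assms(1) nested by auto
  then show ?thesis
    using odd_card_inter_doubleton_iff[OF ends_distinct[OF assms(1,1)]] by blast
qed

lemma card_paths_through_le_1:
  assumes "Z \<in> Sys"
  shows "card (paths_through Z) \<le> 1"
proof -
  have "finite (paths_through Z)"
    using finite_Sp unfolding paths_through_def by simp
  moreover have "\<forall>s\<in>paths_through Z. \<forall>t\<in>paths_through Z. s = t"
    using request_unique[OF _ _ assms] unfolding paths_through_def by blast
  ultimately show ?thesis
    by (simp add: card_le_Suc0_iff_eq)
qed

lemma card_coloured_eq_sum:
  "card (Z \<inter> (A \<union> B)) = (\<Sum>s\<in>Sp. card ({\<pi> s, \<sigma> s} \<inter> Z))"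
proof -
  have "Z \<inter> (A \<union> B) = (\<Union>s\<in>Sp. {\<pi> s, \<sigma> s} \<inter> Z)"
    using image_\<pi> image_\<sigma> by blast
  moreover have "card (\<Union>s\<in>Sp. {\<pi> s, \<sigma> s} \<inter> Z) = (\<Sum>s\<in>Sp. card ({\<pi> s, \<sigma> s} \<inter> Z))"
    using finite_Sp ends_disjoint by (intro card_UN_disjoint) auto
  ultimately show ?thesis
    by simp
qed

lemma odd_card_coloured_iff:
  assumes "Z \<in> Sys"
  shows "odd (card (Z \<inter> (A \<union> B))) \<longleftrightarrow> paths_through Z \<noteq> {}"
proof -
  have "odd (card (Z \<inter> (A \<union> B))) \<longleftrightarrow> odd (card {s \<in> Sp. odd (card ({\<pi> s, \<sigma> s} \<inter> Z))})"
    by (simp add: card_coloured_eq_sum even_sum_iff[OF finite_Sp])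
  also have "{s \<in> Sp. odd (card ({\<pi> s, \<sigma> s} \<inter> Z))} = paths_through Z"
    using odd_card_ends_iff[OF _ assms] paths_through_def by blast
  also have "odd (card (paths_through Z)) \<longleftrightarrow> paths_through Z \<noteq> {}"
  proof -
    have "finite (paths_through Z)"
      using finite_Sp unfolding paths_through_def by simp
    moreover have "card (paths_through Z) = 0 \<or> card (paths_through Z) = 1"
      using card_paths_through_le_1[OF assms] by linarith
    ultimately show ?thesis
      by auto
  qed
  finally show ?thesis .
qed

lemma even_card_coloured_node:
  assumes "s \<in> Sp"
  shows "even (card (s \<inter> (A \<union> B)))"
proof -
  have "paths_through s = {}"
    using request_unique[OF _ assms] ends_in_node[OF assms] Sp_subset_Sys assms
    unfolding paths_through_def by blast
  then show ?thesis
    using odd_card_coloured_iff Sp_subset_Sys assms by blast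
qed

lemma node_iff_least_even_node:
  "X \<in> Sp \<and> \<pi> X = a \<longleftrightarrow> a \<in> A \<and> least_even_node Sys (A \<union> B) X a"
proof
  assume "X \<in> Sp \<and> \<pi> X = a"
  moreover have "odd (card (Y \<inter> (A \<union> B)))" if "Y \<in> Sys" "\<pi> X \<in> Y" "Y \<subset> X" "X \<in> Sp" for Y
    using that odd_card_coloured_iff unfolding paths_through_def by blast
  ultimately show "a \<in> A \<and> least_even_node Sys (A \<union> B) X a"
    unfolding least_even_node_def
    using image_\<pi> Sp_subset_Sys ends_in_node even_card_coloured_node by blast
next
  assume least: "a \<in> A \<and> least_even_node Sys (A \<union> B) X a"
  then obtain t where "t \<in> Sp" and "\<pi> t = a"
    using image_\<pi> by blast
  have "t \<in> Sys" and "a \<in> t"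
    using \<open>t \<in> Sp\<close> \<open>\<pi> t = a\<close> Sp_subset_Sys ends_in_node by blast+
  have "X \<in> Sys" and "a \<in> X" and "even (card (X \<inter> (A \<union> B)))"
    using least unfolding least_even_node_def by blast+
  have "t = X"
  proof (rule ccontr)
    assume "t \<noteq> X"
    from nested_if_meet[OF \<open>t \<in> Sys\<close> \<open>X \<in> Sys\<close> \<open>a \<in> t\<close> \<open>a \<in> X\<close>] show False
    proof
      assume "t \<subseteq> X"
      then show False
        using least \<open>t \<noteq> X\<close> \<open>t \<in> Sys\<close> \<open>a \<in> t\<close> even_card_coloured_node[OF \<open>t \<in> Sp\<close>]
        unfolding least_even_node_def by blast
    next
      assume "X \<subseteq> t"
      then have "t \<in> paths_through X"
        using \<open>t \<noteq> X\<close> \<open>t \<in> Sp\<close> \<open>\<pi> t = a\<close> \<open>a \<in> X\<close> unfolding paths_through_def by blast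
      then show False
        using odd_card_coloured_iff[OF \<open>X \<in> Sys\<close>] \<open>even (card (X \<inter> (A \<union> B)))\<close> by blast
    qed
  qed
  then show "X \<in> Sp \<and> \<pi> X = a"
    using \<open>t \<in> Sp\<close> \<open>\<pi> t = a\<close> by blast
qed

lemma A_representative_iff: "A_representative U Sys A B Sp X a \<longleftrightarrow> X \<in> Sp \<and> \<pi> X = a"
proof
  assume "A_representative U Sys A B Sp X a"
  then obtain \<pi>' \<sigma>' where pair': "identifying_pair U Sys Sp \<pi>' \<sigma>'"
    and images': "\<pi>' ` Sp = A" "\<sigma>' ` Sp = B" and "X \<in> Sp" and "\<pi>' X = a"
    unfolding A_representative_def by blast
  have "identifying_bicolouring U Sys A B Sp \<pi>' \<sigma>'"
    using laminar bicolouring pair' images' by unfold_locales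
  then have "X \<in> Sp \<and> \<pi>' X = a \<longleftrightarrow> a \<in> A \<and> least_even_node Sys (A \<union> B) X a"
    by (rule identifying_bicolouring.node_iff_least_even_node)
  then have "a \<in> A \<and> least_even_node Sys (A \<union> B) X a"
    using \<open>X \<in> Sp\<close> \<open>\<pi>' X = a\<close> by blast
  then show "X \<in> Sp \<and> \<pi> X = a"
    by (simp add: node_iff_least_even_node)
next
  assume "X \<in> Sp \<and> \<pi> X = a"
  then show "A_representative U Sys A B Sp X a"
    unfolding A_representative_def using pair image_\<pi> image_\<sigma> by blast
qed

end

theorem lemma3p11:
  "\<exists>\<phi> :: cmso2. \<forall>(U :: nat set) Sys A B Sp.
     laminar U Sys \<and> bicolouring U A B \<and> identifies U Sys A B Sp \<longrightarrow>
     (\<forall>a X v V. a \<in> U \<and> X \<subseteq> U \<and> v 0 = a \<and> V 0 = X \<longrightarrow>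
        (sat U Sys A B v V \<phi> \<longleftrightarrow>
           inner_node Sys X \<and> X \<in> Sp \<and> A_representative U Sys A B Sp X a))"
proof (intro exI[of _ repr_AB] allI impI)
  fix U :: "nat set" and Sys A B Sp a X and v :: "nat \<Rightarrow> nat" and V :: "nat \<Rightarrow> nat set"
  assume setting: "laminar U Sys \<and> bicolouring U A B \<and> identifies U Sys A B Sp"
    and assignment: "a \<in> U \<and> X \<subseteq> U \<and> v 0 = a \<and> V 0 = X"
  then obtain \<pi> \<sigma> where "identifying_bicolouring U Sys A B Sp \<pi> \<sigma>"
    unfolding identifies_def identifying_bicolouring_def by blast
  then interpret identifying_bicolouring U Sys A B Sp \<pi> \<sigma> .
  have "A \<union> B \<subseteq> U"
    using bicolouring unfolding bicolouring_def by blast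
  then have "sat U Sys A B v V repr_AB \<longleftrightarrow> a \<in> A \<and> least_even_node Sys (A \<union> B) X a"
    using sat_repr_AB[OF Sys_subset_Pow _ \<open>A \<union> B \<subseteq> U\<close>, of V v] assignment by simp
  also have "\<dots> \<longleftrightarrow> X \<in> Sp \<and> \<pi> X = a"
    by (rule node_iff_least_even_node[symmetric])
  also have "\<dots> \<longleftrightarrow> inner_node Sys X \<and> X \<in> Sp \<and> A_representative U Sys A B Sp X a"
    using A_representative_iff Sp_inner by blast
  finally show "sat U Sys A B v V repr_AB \<longleftrightarrow>
      inner_node Sys X \<and> X \<in> Sp \<and> A_representative U Sys A B Sp X a" .
qed

end
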